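(* Assume (A1)–(A3), and let $\varepsilon\in(0,1)$ be such that $\mathbb{E}[\xi^\varepsilon]<\infty$ and $\gamma-1-\varepsilon>0$. Let $p>0$ and let $g:[0,\infty)\to\mathbb{R}$ be a continuous function satisfying, for all $u>0$, \[ g(u)=\frac{\mu}{u^\gamma e^{-\alpha/u}}\int_0^u t^{\gamma-2}e^{-\alpha/t}\Big(p\,\bar F(t)+\int_0^t g(z)\bar F(t-z)\,dz\Big)dt. \] Then $g(u)=O(u^{-1-\varepsilon})$ as $u\to\infty$; in particular $g\in L^1(\mathbb{R}_+)$.
   Context: $\xi$ is a positive random variable with distribution function $F$, $\bar F=1-F$. Parameters: $\kappa\in(0,1]$, $a\in\mathbb{R}$, $r\ge0$, $\sigma>0$, $c>0$, $\lambda>0$, $\gamma=\dfrac{2((a-r)\kappa+r)}{\kappa^2\sigma^2}$, $\alpha=\dfrac{2c}{\kappa^2\sigma^2}$, $\mu=\dfrac{2\lambda}{\kappa^2\sigma^2}$. Assumptions: (A1) $F(0)=0$; (A2) there is $\varepsilon>0$ with $\mathbb{E}[\xi^\varepsilon]<\infty$; (A3) $\gamma>1$. *)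

theory Defs
  imports "HOL-Probability.Probability"
begin

definition distr_fun :: "'a measure \<Rightarrow> ('a \<Rightarrow> real) \<Rightarrow> real \<Rightarrow> real" where
  "distr_fun M xi t = measure M {\<omega> \<in> space M. xi \<omega> \<le> t}"

definition tail_fun :: "'a measure \<Rightarrow> ('a \<Rightarrow> real) \<Rightarrow> real \<Rightarrow> real" where
  "tail_fun M xi t = 1 - distr_fun M xi t"

end

(* By Markov's inequality the tail T = 1 - F of xi satisfies T(s) <= C (1 + s) powr (-e).
   Put h(z) = |g z| (1 + z) powr (1 + e) and let S bound h on [0, U]. Cutting the convolution
   of g with T at a threshold U0, the part z <= U0 is O((1 + t) powr (-e)), and the part z > U0
   is at most S (1 + U0) powr (-e/2) O((1 + t) powr (-e)). Because gamma > 1 + e, the outer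
   averaging operator turns a bound D (1 + t) powr (-e) on its integrand into
   D / (gamma - 1 - e) u powr (-1 - e). For U0 large this yields h <= c + S/2 on (U0, U], so the
   maximum of h on [0, U] is at most max (max of h on [0, U0]) (2 c), independently of U. *)

theory Submission
  imports Defs
begin

lemma powr_split_exponent:
  fixes x :: real
  shows "a = b + c \<Longrightarrow> x powr a = x powr b * x powr c"
  by (simp only: powr_add)

lemma mult_shifted_powr_le_iff:
  fixes a S z e :: real
  assumes "0 \<le> z"
  shows "a * (1 + z) powr (1 + e) \<le> S \<longleftrightarrow> a \<le> S * (1 + z) powr (-1 - e)"
proof -
  have "(1 + z) powr (-1 - e) = inverse ((1 + z) powr (1 + e))"
    using powr_minus[of "1 + z" "1 + e"] by simp
  with assms show ?thesis
    by (simp add: pos_le_divide_eq divide_inverse[symmetric])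
qed

lemma mult_shifted_powr_le_of_le_powr:
  fixes a K z e :: real
  assumes z: "1 \<le> z" and e: "0 \<le> 1 + e" and K: "0 \<le> K" and a: "a \<le> K * z powr (-1 - e)"
  shows "a * (1 + z) powr (1 + e) \<le> 2 powr (1 + e) * K"
proof -
  have "(1 + z) powr (1 + e) \<le> 2 powr (1 + e) * z powr (1 + e)"
    using z e powr_mono2[of "1 + e" "1 + z" "2 * z"] by (simp add: powr_mult)
  with a K have "a * (1 + z) powr (1 + e) \<le> K * z powr (-1 - e) * (2 powr (1 + e) * z powr (1 + e))"
    by (intro mult_mono) auto
  also have "\<dots> = 2 powr (1 + e) * K * (z powr (1 + e) * z powr (-1 - e))"
    by (simp add: ac_simps)
  also have "z powr (1 + e) * z powr (-1 - e) = 1"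
    using z powr_split_exponent[of 0 "1 + e" "-1 - e" z] by simp
  finally show ?thesis
    by simp
qed

lemma tendsto_shifted_powr_at_top:
  fixes a :: real
  assumes "0 < a"
  shows "((\<lambda>z. (1 + z) powr (- a)) \<longlongrightarrow> 0) at_top"
  using assms by (intro tendsto_neg_powr)
    (auto intro!: filterlim_tendsto_add_at_top[OF tendsto_const filterlim_ident])

lemma eventually_shifted_powr_mult_le:
  fixes a E r :: real
  assumes "0 < a" "0 < r"
  shows "\<forall>\<^sub>F U in at_top. (1 + U) powr (- a) * E \<le> r"
proof -
  have "((\<lambda>U. (1 + U) powr (- a) * E) \<longlongrightarrow> 0 * E) at_top"
    using assms by (intro tendsto_mult tendsto_const tendsto_shifted_powr_at_top)
  then have "\<forall>\<^sub>F U in at_top. (1 + U) powr (- a) * E < r"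
    using assms by (intro order_tendstoD(2)) auto
  then show ?thesis
    by (rule eventually_mono) simp
qed

(* No integrability of f is assumed: a non-integrable f has integral 0. *)
lemma set_integral_abs_le_of_bound:
  fixes f b :: "'a \<Rightarrow> real"
  assumes b: "set_integrable M S b" and fb: "\<And>x. x \<in> S \<Longrightarrow> \<bar>f x\<bar> \<le> b x"
  shows "\<bar>LINT x:S|M. f x\<bar> \<le> (LINT x:S|M. b x)"
proof (cases "set_integrable M S f")
  case True
  have "\<bar>LINT x:S|M. f x\<bar> \<le> (LINT x:S|M. \<bar>f x\<bar>)"
    using set_integral_norm_bound[OF True] by simp
  also have "\<dots> \<le> (LINT x:S|M. b x)"
    using True b fb by (intro set_integral_mono set_integrable_abs)
  finally show ?thesis .
next
  case False
  have "0 \<le> (\<integral>x. indicator S x *\<^sub>R b x \<partial>M)"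
    using fb by (intro Bochner_Integration.integral_nonneg) (auto simp: indicator_def intro: order_trans[OF abs_ge_zero])
  with False show ?thesis
    by (simp add: set_lebesgue_integral_def set_integrable_def not_integrable_integral_eq)
qed

lemma set_integral_FTC_Ioo_nonneg:
  fixes f F :: "real \<Rightarrow> real"
  assumes "a < b"
    and "\<And>x. a < x \<Longrightarrow> x < b \<Longrightarrow> (F has_real_derivative f x) (at x)"
    and "\<And>x. a < x \<Longrightarrow> x < b \<Longrightarrow> isCont f x"
    and "\<And>x. a < x \<Longrightarrow> x < b \<Longrightarrow> 0 \<le> f x"
    and "(F \<longlongrightarrow> A) (at_right a)" and "(F \<longlongrightarrow> B) (at_left b)"
  shows "set_integrable lborel {a<..<b} f" "(LINT x:{a<..<b}|lborel. f x) = B - A"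
proof -
  have "ereal a < ereal b" using assms by simp
  note FTC = interval_integral_FTC_nonneg[OF this, of F f A B]
  have nonneg: "AE x in lborel. ereal a < ereal x \<longrightarrow> ereal x < ereal b \<longrightarrow> 0 \<le> f x"
    using assms by auto
  show "set_integrable lborel {a<..<b} f"
    using FTC(1)[OF _ _ nonneg] assms by (simp add: ereal_tendsto_simps1)
  show "(LINT x:{a<..<b}|lborel. f x) = B - A"
    using FTC(2)[OF _ _ nonneg] assms by (simp add: ereal_tendsto_simps1 interval_lebesgue_integral_def)
qed

lemma set_integrable_FTC_Ioi_nonneg:
  fixes f F :: "real \<Rightarrow> real"
  assumes "\<And>x. a < x \<Longrightarrow> (F has_real_derivative f x) (at x)"
    and "\<And>x. a < x \<Longrightarrow> isCont f x" and "\<And>x. a < x \<Longrightarrow> 0 \<le> f x"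
    and "(F \<longlongrightarrow> A) (at_right a)" and "(F \<longlongrightarrow> B) at_top"
  shows "set_integrable lborel {a<..} f"
proof -
  have "ereal a < \<infinity>" by simp
  note FTC = interval_integral_FTC_nonneg[OF this, of F f A B]
  have nonneg: "AE x in lborel. ereal a < ereal x \<longrightarrow> ereal x < \<infinity> \<longrightarrow> 0 \<le> f x"
    using assms by auto
  show ?thesis
    using FTC(1)[OF _ _ nonneg] assms by (simp add: ereal_tendsto_simps1)
qed

lemma set_integral_powr_Ioo:
  fixes t a :: real
  assumes t: "0 < t" and a: "-1 < a"
  shows "set_integrable lborel {0<..<t} (\<lambda>x. x powr a)"
    "(LINT x:{0<..<t}|lborel. x powr a) = t powr (a + 1) / (a + 1)"
proof -
  let ?F = "\<lambda>x::real. x powr (a + 1) / (a + 1)"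
  have deriv: "(?F has_real_derivative x powr a) (at x)" if "0 < x" "x < t" for x
    using that a by (auto intro!: derivative_eq_intros simp: powr_diff)
  have cont: "isCont (\<lambda>x. x powr a) x" if "0 < x" "x < t" for x
    using that by (auto intro!: continuous_intros)
  have "((\<lambda>x. x powr (a + 1)) \<longlongrightarrow> 0) (at_right 0)"
    using a by (intro tendsto_zero_powrI) (auto intro!: tendsto_ident_at eventually_at_rightI[of 0 1])
  then have lim0: "(?F \<longlongrightarrow> 0) (at_right 0)"
    by (rule tendsto_divide_zero)
  have limt: "(?F \<longlongrightarrow> ?F t) (at_left t)"
    using t a by (intro tendsto_intros) (auto simp: filterlim_at_split)
  show "set_integrable lborel {0<..<t} (\<lambda>x. x powr a)"
    "(LINT x:{0<..<t}|lborel. x powr a) = t powr (a + 1) / (a + 1)"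
    using set_integral_FTC_Ioo_nonneg[OF t deriv cont _ lim0 limt] by simp_all
qed

lemma has_real_derivative_shifted_powr:
  fixes e z :: real
  assumes "0 < e" "-1 < z"
  shows "((\<lambda>z. - ((1 + z) powr (- e)) / e) has_real_derivative (1 + z) powr (-1 - e)) (at z)"
proof -
  have "((\<lambda>z. (1 + z) powr (- e)) has_real_derivative (- e) * (1 + z) powr (- e - 1)) (at z)"
    using assms by (auto intro!: derivative_eq_intros)
  moreover have "- e - 1 = -1 - e"
    by simp
  ultimately have "((\<lambda>z. (1 + z) powr (- e)) has_real_derivative (- e) * (1 + z) powr (-1 - e)) (at z)"
    by metis
  from DERIV_cdivide[OF DERIV_minus[OF this], of e] show ?thesis
    using assms by simp
qed

lemma set_integral_shifted_powr_Ioo_le: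
  fixes t e :: real
  assumes t: "0 < t" and e: "0 < e"
  shows "set_integrable lborel {0<..<t} (\<lambda>z. (1 + z) powr (-1 - e))"
    "(LINT z:{0<..<t}|lborel. (1 + z) powr (-1 - e)) \<le> 1 / e"
proof -
  let ?F = "\<lambda>z::real. - ((1 + z) powr (- e)) / e"
  have deriv: "(?F has_real_derivative (1 + z) powr (-1 - e)) (at z)" if "0 < z" "z < t" for z
    using that e by (intro has_real_derivative_shifted_powr) auto
  have cont: "isCont (\<lambda>z. (1 + z) powr (-1 - e)) z" if "0 < z" "z < t" for z
    using that by (auto intro!: continuous_intros)
  have lim0: "(?F \<longlongrightarrow> ?F 0) (at_right 0)" and limt: "(?F \<longlongrightarrow> ?F t) (at_left t)"
    using t e by (intro tendsto_intros; auto simp: filterlim_at_split)+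
  note FTC = set_integral_FTC_Ioo_nonneg[OF t deriv cont _ lim0 limt]
  show "set_integrable lborel {0<..<t} (\<lambda>z. (1 + z) powr (-1 - e))"
    using FTC(1) by simp
  have "?F t - ?F 0 \<le> 1 / e"
    using e by (simp add: divide_right_mono)
  then show "(LINT z:{0<..<t}|lborel. (1 + z) powr (-1 - e)) \<le> 1 / e"
    using FTC(2) by simp
qed

lemma set_integrable_shifted_powr_Ioi:
  fixes e :: real
  assumes e: "0 < e"
  shows "set_integrable lborel {0<..} (\<lambda>z. (1 + z) powr (-1 - e))"
proof -
  let ?F = "\<lambda>z::real. - ((1 + z) powr (- e)) / e"
  have deriv: "(?F has_real_derivative (1 + z) powr (-1 - e)) (at z)" if "0 < z" for z
    using that e by (intro has_real_derivative_shifted_powr) auto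
  have cont: "isCont (\<lambda>z. (1 + z) powr (-1 - e)) z" if "0 < z" for z
    using that by (auto intro!: continuous_intros)
  have lim0: "(?F \<longlongrightarrow> ?F 0) (at_right 0)"
    using e by (intro tendsto_intros) (auto simp: filterlim_at_split)
  have lim_top: "(?F \<longlongrightarrow> - 0 / e) at_top"
    using e by (intro tendsto_divide tendsto_minus tendsto_const tendsto_shifted_powr_at_top) auto
  show ?thesis
    using set_integrable_FTC_Ioi_nonneg[OF deriv cont _ lim0 lim_top] by simp
qed

lemma set_integral_reflected_powr_Ioo_le:
  fixes t e :: real
  assumes t: "0 < t" and e: "0 < e" "e < 1"
  shows "set_integrable lborel {0<..<t} (\<lambda>z. (1 + t - z) powr (- e))"
    "(LINT z:{0<..<t}|lborel. (1 + t - z) powr (- e)) \<le> (1 + t) powr (1 - e) / (1 - e)"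
proof -
  let ?F = "\<lambda>z::real. - ((1 + t - z) powr (1 - e)) / (1 - e)"
  have deriv: "(?F has_real_derivative (1 + t - z) powr (- e)) (at z)" if "0 < z" "z < t" for z
  proof -
    have "((\<lambda>z. (1 + t - z) powr (1 - e)) has_real_derivative (1 - e) * (1 + t - z) powr (- e) * (- 1)) (at z)"
      using that e by (auto intro!: derivative_eq_intros)
    from DERIV_cdivide[OF DERIV_minus[OF this], of "1 - e"] show ?thesis
      using e by simp
  qed
  have cont: "isCont (\<lambda>z. (1 + t - z) powr (- e)) z" if "0 < z" "z < t" for z
    using that by (auto intro!: continuous_intros)
  have lim0: "(?F \<longlongrightarrow> ?F 0) (at_right 0)" and limt: "(?F \<longlongrightarrow> ?F t) (at_left t)"
    using t e by (intro tendsto_intros; auto simp: filterlim_at_split)+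
  note FTC = set_integral_FTC_Ioo_nonneg[OF t deriv cont _ lim0 limt]
  show "set_integrable lborel {0<..<t} (\<lambda>z. (1 + t - z) powr (- e))"
    using FTC(1) by simp
  have "?F t - ?F 0 \<le> (1 + t) powr (1 - e) / (1 - e)"
    using e by (simp add: divide_right_mono)
  then show "(LINT z:{0<..<t}|lborel. (1 + t - z) powr (- e)) \<le> (1 + t) powr (1 - e) / (1 - e)"
    using FTC(2) by simp
qed

lemma tail_fun_nonneg:
  assumes "prob_space M"
  shows "0 \<le> tail_fun M xi t"
  using prob_space.prob_le_1[OF assms] by (simp add: tail_fun_def distr_fun_def)

lemma tail_fun_le_moment:
  fixes xi :: "'a \<Rightarrow> real"
  assumes M: "prob_space M" and xi: "xi \<in> borel_measurable M"
    and mom: "integrable M (\<lambda>\<omega>. xi \<omega> powr e)" and t: "0 < t" and e: "0 < e"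
  shows "tail_fun M xi t \<le> (\<integral>\<omega>. xi \<omega> powr e \<partial>M) / t powr e"
proof -
  interpret prob_space M by fact
  have "space M - {\<omega> \<in> space M. xi \<omega> \<le> t} = {\<omega> \<in> space M. t < xi \<omega>}" by auto
  then have "tail_fun M xi t = prob {\<omega> \<in> space M. t < xi \<omega>}"
    using prob_compl[of "{\<omega> \<in> space M. xi \<omega> \<le> t}"] xi
    by (simp add: tail_fun_def distr_fun_def)
  also have "\<dots> \<le> prob {\<omega> \<in> space M. t powr e \<le> xi \<omega> powr e}"
    using t e xi by (intro finite_measure_mono) (auto intro!: powr_mono2)
  also have "\<dots> \<le> (\<integral>\<omega>. xi \<omega> powr e \<partial>M) / t powr e"
    using t by (intro integral_Markov_inequality_measure[OF mom, where A = "space M"]) auto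
  finally show ?thesis .
qed

lemma tail_fun_le_shifted_powr:
  fixes xi :: "'a \<Rightarrow> real"
  assumes M: "prob_space M" and xi: "xi \<in> borel_measurable M"
    and mom: "integrable M (\<lambda>\<omega>. xi \<omega> powr e)" and t: "0 < t" and e: "0 < e"
  shows "tail_fun M xi t \<le> 2 powr e * (1 + (\<integral>\<omega>. xi \<omega> powr e \<partial>M)) * (1 + t) powr (- e)"
proof -
  define B where "B = (\<integral>\<omega>. xi \<omega> powr e \<partial>M)"
  have B: "0 \<le> B"
    unfolding B_def by (intro Bochner_Integration.integral_nonneg) auto
  have tail: "0 \<le> tail_fun M xi t" "tail_fun M xi t \<le> 1"
    using tail_fun_nonneg[OF M] measure_nonneg
    by (auto simp: tail_fun_def distr_fun_def)
  have "tail_fun M xi t * (1 + t) powr e \<le> 2 powr e * (1 + B)"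
  proof (cases "t \<le> 1")
    case True
    have "tail_fun M xi t * (1 + t) powr e \<le> 1 * 2 powr e"
      using True t e tail by (intro mult_mono powr_mono2) auto
    also have "\<dots> \<le> (1 + B) * 2 powr e"
      using B by (intro mult_right_mono) auto
    finally show ?thesis by (simp add: mult.commute)
  next
    case False
    have "(1 + t) powr e \<le> (2 * t) powr e"
      using False e by (intro powr_mono2) auto
    then have "tail_fun M xi t * (1 + t) powr e \<le> B / t powr e * (2 powr e * t powr e)"
      using tail_fun_le_moment[OF M xi mom t e] tail t
      by (intro mult_mono) (auto simp: B_def powr_mult)
    also have "\<dots> = B * 2 powr e"
      using t by simp
    also have "\<dots> \<le> (1 + B) * 2 powr e"
      by (intro mult_right_mono) auto
    finally show ?thesis by (simp add: mult.commute)
  qed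
  then show ?thesis
    using t by (simp add: B_def powr_minus divide_simps)
qed

lemma reflected_powr_le_near:
  fixes z t V e :: real
  assumes z: "0 \<le> z" "z \<le> t" "z \<le> V" and e: "0 \<le> e"
  shows "(1 + t - z) powr (- e) \<le> (1 + V) powr (1 + 2 * e) * (1 + t) powr (- e) * (1 + z) powr (-1 - e)"
proof -
  have "(1 + t) powr e \<le> ((1 + z) * (1 + t - z)) powr e"
    using z e mult_right_mono[of z t z] by (intro powr_mono2) (auto simp: algebra_simps)
  then have "(1 + t - z) powr (- e) \<le> (1 + t) powr (- e) * (1 + z) powr e"
    using z by (simp add: powr_mult powr_minus divide_simps mult.commute)
  also have "(1 + z) powr e = (1 + z) powr (1 + 2 * e) * (1 + z) powr (-1 - e)"
    using z by (simp flip: powr_add)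
  also have "\<dots> \<le> (1 + V) powr (1 + 2 * e) * (1 + z) powr (-1 - e)"
    using z e by (intro mult_right_mono powr_mono2) auto
  finally show ?thesis
    by (simp add: mult_left_mono mult.assoc mult.left_commute)
qed

lemma convolution_kernel_le_far_left:
  fixes z t V e :: real
  assumes z: "0 \<le> V" "V \<le> z" "2 * z \<le> t" and e: "0 < e"
  shows "(1 + z) powr (-1 - e) * (1 + t - z) powr (- e) \<le>
    2 powr (1 + e) * (1 + V) powr (- e / 2) * (1 + t) powr (- e) * (1 + z) powr (-1 - e / 2)"
    (is "?P powr _ * ?Q powr _ \<le> ?c * ?\<rho> * ?R powr _ * _")
proof -
  have "?Q powr (- e) \<le> (?R / 2) powr (- e)"
    using z e by (intro powr_mono2') auto
  also have "\<dots> = 2 powr e * ?R powr (- e)"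
    using z by (simp add: powr_divide powr_minus divide_simps)
  also have "\<dots> \<le> ?c * ?R powr (- e)"
    by (intro mult_right_mono powr_mono) auto
  finally have Q: "?Q powr (- e) \<le> ?c * ?R powr (- e)" .
  have "?P powr (-1 - e) * ?Q powr (- e) = ?P powr (-1 - e / 2) * ?P powr (- e / 2) * ?Q powr (- e)"
    by (subst powr_split_exponent[of _ "-1 - e / 2" "- e / 2"]) auto
  also have "\<dots> \<le> ?P powr (-1 - e / 2) * ?\<rho> * (?c * ?R powr (- e))"
    using z e Q by (intro mult_mono mult_left_mono powr_mono2') auto
  finally show ?thesis
    by (simp add: ac_simps)
qed

lemma convolution_kernel_le_far_right:
  fixes z t V e :: real
  assumes z: "0 \<le> V" "V \<le> z" "z \<le> t" "t < 2 * z" and e: "0 < e"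
  shows "(1 + z) powr (-1 - e) * (1 + t - z) powr (- e) \<le>
    2 powr (1 + e) * (1 + V) powr (- e / 2) * (1 + t) powr (- e) *
      ((1 + t) powr (-1 + e / 2) * (1 + t - z) powr (- e))"
    (is "?P powr _ * ?Q powr _ \<le> ?c * ?\<rho> * ?R powr _ * _")
proof -
  have "?P powr (-1 - e) \<le> (?R / 2) powr (-1 - e)"
    using z e by (intro powr_mono2') auto
  also have "\<dots> = ?c * ?R powr (-1 - e)"
  proof -
    have "2 powr (-1 - e) * ?c = 1"
      using powr_split_exponent[of 0 "-1 - e" "1 + e" 2] by simp
    then show ?thesis
      using z by (simp add: powr_divide field_simps)
  qed
  also have "\<dots> = ?c * ?R powr (- e) * ?R powr (-1 + e / 2) * ?R powr (- e / 2)"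
    using powr_split_exponent[of "-1 - e" "- e + (-1 + e / 2)" "- e / 2" ?R]
      powr_split_exponent[of "- e + (-1 + e / 2)" "- e" "-1 + e / 2" ?R] by simp
  also have "\<dots> \<le> ?c * ?R powr (- e) * ?R powr (-1 + e / 2) * ?\<rho>"
    using z e by (intro mult_left_mono powr_mono2') auto
  finally have "?P powr (-1 - e) * ?Q powr (- e) \<le>
      ?c * ?R powr (- e) * ?R powr (-1 + e / 2) * ?\<rho> * ?Q powr (- e)"
    by (intro mult_right_mono) auto
  then show ?thesis
    by (simp add: ac_simps)
qed

(* The factor (1 + V) powr (-e/2) is what makes the part z >= V of the convolution small. *)
lemma convolution_kernel_le_far:
  fixes z t V e :: real
  assumes z: "0 \<le> V" "V \<le> z" "z \<le> t" and e: "0 < e"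
  shows "(1 + z) powr (-1 - e) * (1 + t - z) powr (- e) \<le>
    2 powr (1 + e) * (1 + V) powr (- e / 2) * (1 + t) powr (- e) *
      ((1 + z) powr (-1 - e / 2) + (1 + t) powr (-1 + e / 2) * (1 + t - z) powr (- e))"
proof (cases "2 * z \<le> t")
  case True
  show ?thesis
    by (rule order.trans[OF convolution_kernel_le_far_left[OF z(1,2) True e] mult_left_mono]) simp_all
next
  case False
  show ?thesis
    using z e False
    by (intro order.trans[OF convolution_kernel_le_far_right mult_left_mono]) simp_all
qed

(* Sum of the bounds for z <= U0 and for z >= U0; its integral over (0, t) is bounded
   independently of t. *)
definition convolution_majorant :: "real \<Rightarrow> real \<Rightarrow> real \<Rightarrow> real \<Rightarrow> real \<Rightarrow> real" where
  "convolution_majorant e t X Y z = X * (1 + z) powr (-1 - e) +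
    Y * ((1 + z) powr (-1 - e / 2) + (1 + t) powr (-1 + e / 2) * (1 + t - z) powr (- e))"

lemma convolution_integrand_le:
  fixes a b e U0 K0 S C0 z t :: real
  assumes e: "0 < e" and U0: "0 \<le> U0" and K0: "0 \<le> K0" and S: "0 \<le> S" and C0: "0 \<le> C0"
    and z: "0 \<le> z" "z \<le> t"
    and a_near: "z \<le> U0 \<Longrightarrow> \<bar>a\<bar> \<le> K0" and a_far: "\<bar>a\<bar> \<le> S * (1 + z) powr (-1 - e)"
    and b: "0 \<le> b" "b \<le> C0 * (1 + t - z) powr (- e)"
  shows "\<bar>a * b\<bar> \<le> (1 + t) powr (- e) * convolution_majorant e t
    (K0 * C0 * (1 + U0) powr (1 + 2 * e)) (S * C0 * 2 powr (1 + e) * (1 + U0) powr (- e / 2)) z"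
    (is "_ \<le> _ * convolution_majorant e t ?X ?Y z")
proof -
  define far where "far = (1 + z) powr (-1 - e / 2) + (1 + t) powr (-1 + e / 2) * (1 + t - z) powr (- e)"
  have "0 \<le> ?X * (1 + z) powr (-1 - e)" "0 \<le> ?Y * far"
    using K0 C0 S unfolding far_def by simp_all
  then have majorant: "?X * (1 + z) powr (-1 - e) \<le> convolution_majorant e t ?X ?Y z"
    "?Y * far \<le> convolution_majorant e t ?X ?Y z"
    unfolding convolution_majorant_def far_def by simp_all
  show ?thesis
  proof (cases "z \<le> U0")
    case True
    have "\<bar>a * b\<bar> \<le> K0 * (C0 * (1 + t - z) powr (- e))"
      unfolding abs_mult using a_near True b K0 by (intro mult_mono) auto
    also have "\<dots> \<le> K0 * (C0 * ((1 + U0) powr (1 + 2 * e) * (1 + t) powr (- e) * (1 + z) powr (-1 - e)))"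
      using reflected_powr_le_near[of z t U0 e] True z e K0 C0 by (intro mult_left_mono) auto
    also have "\<dots> = (1 + t) powr (- e) * (?X * (1 + z) powr (-1 - e))"
      by (simp add: ac_simps)
    also have "\<dots> \<le> (1 + t) powr (- e) * convolution_majorant e t ?X ?Y z"
      using majorant by (intro mult_left_mono) auto
    finally show ?thesis .
  next
    case False
    have "\<bar>a * b\<bar> \<le> S * (1 + z) powr (-1 - e) * (C0 * (1 + t - z) powr (- e))"
      unfolding abs_mult using a_far b S by (intro mult_mono) auto
    also have "\<dots> = S * C0 * ((1 + z) powr (-1 - e) * (1 + t - z) powr (- e))"
      by (simp add: ac_simps)
    also have "\<dots> \<le> S * C0 * (2 powr (1 + e) * (1 + U0) powr (- e / 2) * (1 + t) powr (- e) * far)"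
      using convolution_kernel_le_far[of U0 z t e] False z U0 e S C0
      unfolding far_def by (intro mult_left_mono) auto
    also have "\<dots> = (1 + t) powr (- e) * (?Y * far)"
      by (simp add: ac_simps)
    also have "\<dots> \<le> (1 + t) powr (- e) * convolution_majorant e t ?X ?Y z"
      using majorant by (intro mult_left_mono) auto
    finally show ?thesis .
  qed
qed

lemma set_integral_convolution_majorant_le:
  fixes t e X Y :: real
  assumes t: "0 < t" and e: "0 < e" "e < 1" and X: "0 \<le> X" and Y: "0 \<le> Y"
  shows "set_integrable lborel {0<..<t} (convolution_majorant e t X Y)"
    "(LINT z:{0<..<t}|lborel. convolution_majorant e t X Y z) \<le> X / e + Y * (2 / e + 1 / (1 - e))"
proof -
  let ?W = "(1 + t) powr (-1 + e / 2)"
  note I1 = set_integral_shifted_powr_Ioo_le[OF t e(1)]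
  have "0 < e / 2"
    using e by simp
  note I2 = set_integral_shifted_powr_Ioo_le[OF t this]
  note I3 = set_integral_reflected_powr_Ioo_le[OF t e]
  have int2: "set_integrable lborel {0<..<t} (\<lambda>z. (1 + z) powr (-1 - e / 2) + ?W * (1 + t - z) powr (- e))"
    using I2(1) I3(1) by (intro set_integral_add(1) set_integrable_mult_right)
  show "set_integrable lborel {0<..<t} (convolution_majorant e t X Y)"
    unfolding convolution_majorant_def[abs_def]
    by (intro set_integral_add(1) set_integrable_mult_right I1(1) int2)
  have W: "?W * ((1 + t) powr (1 - e) / (1 - e)) = (1 + t) powr (- e / 2) / (1 - e)"
    unfolding times_divide_eq_right
    by (rule arg_cong[where f = "\<lambda>x. x / (1 - e)"], rule powr_split_exponent[symmetric]) simp
  have "(LINT z:{0<..<t}|lborel. convolution_majorant e t X Y z) =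
      X * (LINT z:{0<..<t}|lborel. (1 + z) powr (-1 - e)) +
      Y * ((LINT z:{0<..<t}|lborel. (1 + z) powr (-1 - e / 2)) +
           ?W * (LINT z:{0<..<t}|lborel. (1 + t - z) powr (- e)))"
    unfolding convolution_majorant_def using I1(1) I2(1) I3(1) int2
    by (simp add: set_integral_add set_integrable_mult_right)
  also have "\<dots> \<le> X * (1 / e) + Y * (1 / (e / 2) + ?W * ((1 + t) powr (1 - e) / (1 - e)))"
    using I1(2) I2(2) I3(2) X Y by (intro add_mono mult_left_mono) auto
  also have "\<dots> \<le> X * (1 / e) + Y * (1 / (e / 2) + 1 / (1 - e))"
    using powr_mono2'[of "- e / 2" 1 "1 + t"] t e X Y
    unfolding W by (intro add_mono mult_left_mono divide_right_mono) auto
  finally show "(LINT z:{0<..<t}|lborel. convolution_majorant e t X Y z) \<le> X / e + Y * (2 / e + 1 / (1 - e))"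
    by simp
qed

lemma abs_convolution_le_shifted_powr:
  fixes g T :: "real \<Rightarrow> real" and e U0 K0 S C0 t :: real
  assumes e: "0 < e" "e < 1" and U0: "0 \<le> U0" and S: "0 \<le> S" and C0: "0 \<le> C0" and t: "0 < t"
    and gK: "\<And>z. 0 \<le> z \<Longrightarrow> z \<le> U0 \<Longrightarrow> \<bar>g z\<bar> \<le> K0"
    and gS: "\<And>z. 0 \<le> z \<Longrightarrow> z \<le> t \<Longrightarrow> \<bar>g z\<bar> \<le> S * (1 + z) powr (-1 - e)"
    and T0: "\<And>s. 0 \<le> T s" and Tb: "\<And>s. 0 < s \<Longrightarrow> T s \<le> C0 * (1 + s) powr (- e)"
  shows "\<bar>LINT z:{0<..<t}|lborel. g z * T (t - z)\<bar> \<le> (1 + t) powr (- e) *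
    (K0 * C0 * (1 + U0) powr (1 + 2 * e) / e +
     S * C0 * 2 powr (1 + e) * (1 + U0) powr (- e / 2) * (2 / e + 1 / (1 - e)))"
proof -
  define X where "X = K0 * C0 * (1 + U0) powr (1 + 2 * e)"
  define Y where "Y = S * C0 * 2 powr (1 + e) * (1 + U0) powr (- e / 2)"
  have K0: "0 \<le> K0"
    using gK[of 0] U0 by linarith
  then have X: "0 \<le> X" and Y: "0 \<le> Y"
    using C0 S unfolding X_def Y_def by simp_all
  have "\<bar>g z * T (t - z)\<bar> \<le> (1 + t) powr (- e) * convolution_majorant e t X Y z"
    if z: "z \<in> {0<..<t}" for z
    unfolding X_def Y_def using z gK[of z] gS[of z] T0[of "t - z"] Tb[of "t - z"]
    by (intro convolution_integrand_le[OF e(1) U0 K0 S C0]) (auto simp: add_diff_eq)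
  then have "\<bar>LINT z:{0<..<t}|lborel. g z * T (t - z)\<bar>
      \<le> (LINT z:{0<..<t}|lborel. (1 + t) powr (- e) * convolution_majorant e t X Y z)"
    using set_integral_convolution_majorant_le(1)[OF t e X Y]
    by (intro set_integral_abs_le_of_bound set_integrable_mult_right)
  also have "\<dots> \<le> (1 + t) powr (- e) * (X / e + Y * (2 / e + 1 / (1 - e)))"
    using set_integral_convolution_majorant_le(2)[OF t e X Y] by (simp add: mult_left_mono)
  finally show ?thesis
    unfolding X_def Y_def .
qed

lemma abs_weighted_average_le_powr:
  fixes h :: "real \<Rightarrow> real" and e G A m D u :: real
  assumes e: "0 \<le> e" and G: "1 + e < G" and A: "0 \<le> A" and m: "0 \<le> m" and D: "0 \<le> D"
    and u: "0 < u" and h: "\<And>t. 0 < t \<Longrightarrow> t < u \<Longrightarrow> \<bar>h t\<bar> \<le> D * (1 + t) powr (- e)"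
  shows "\<bar>m / (u powr G * exp (- A / u)) *
      (LINT t:{0<..<u}|lborel. t powr (G - 2) * exp (- A / t) * h t)\<bar>
    \<le> m * D / (G - 1 - e) * u powr (-1 - e)"
proof -
  let ?c = "m / (u powr G * exp (- A / u))"
  have "-1 < G - 2 - e"
    using G by simp
  note I = set_integral_powr_Ioo[OF u this]
  have "\<bar>t powr (G - 2) * exp (- A / t) * h t\<bar> \<le> exp (- A / u) * D * t powr (G - 2 - e)"
    if t: "t \<in> {0<..<u}" for t
  proof -
    have "A / u \<le> A / t"
      using t A by (intro divide_left_mono) auto
    then have exp: "exp (- A / t) \<le> exp (- A / u)"
      by simp
    have "\<bar>h t\<bar> \<le> D * t powr (- e)"
      using h[of t] t e D powr_mono2'[of "- e" t "1 + t"] by (auto intro: order_trans mult_left_mono)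
    then have "\<bar>t powr (G - 2) * exp (- A / t) * h t\<bar> \<le> t powr (G - 2) * exp (- A / u) * (D * t powr (- e))"
      using exp unfolding abs_mult by (intro mult_mono mult_left_mono) auto
    also have "\<dots> = exp (- A / u) * D * t powr (G - 2 - e)"
      by (simp add: powr_split_exponent[of "G - 2 - e" "G - 2" "- e"])
    finally show ?thesis .
  qed
  then have "\<bar>LINT t:{0<..<u}|lborel. t powr (G - 2) * exp (- A / t) * h t\<bar>
      \<le> (LINT t:{0<..<u}|lborel. exp (- A / u) * D * t powr (G - 2 - e))"
    using I(1) by (intro set_integral_abs_le_of_bound set_integrable_mult_right)
  also have "\<dots> = exp (- A / u) * D * (u powr (G - 1 - e) / (G - 1 - e))"
    using I(2) by (simp add: diff_add_eq)
  finally have integral: "\<bar>LINT t:{0<..<u}|lborel. t powr (G - 2) * exp (- A / t) * h t\<bar>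
      \<le> exp (- A / u) * D * (u powr (G - 1 - e) / (G - 1 - e))" .
  have c: "0 \<le> ?c"
    using m u by simp
  have "\<bar>?c * (LINT t:{0<..<u}|lborel. t powr (G - 2) * exp (- A / t) * h t)\<bar>
      \<le> ?c * (exp (- A / u) * D * (u powr (G - 1 - e) / (G - 1 - e)))"
    unfolding abs_mult abs_of_nonneg[OF c] using integral c by (rule mult_left_mono)
  also have "\<dots> = m * D / (G - 1 - e) * (u powr (G - 1 - e) / u powr G)"
    using u by (simp add: field_simps)
  also have "u powr (G - 1 - e) / u powr G = u powr (-1 - e)"
    using u by (simp add: powr_split_exponent[of "G - 1 - e" G "-1 - e"])
  finally show ?thesis .
qed

lemma abs_solution_le_of_bounds:
  fixes g T :: "real \<Rightarrow> real" and e G A m p C0 U0 K0 S u :: real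
  assumes e: "0 < e" "e < 1" and G: "1 + e < G" and A: "0 \<le> A" and m: "0 \<le> m"
    and p: "0 \<le> p" and C0: "0 \<le> C0"
    and T0: "\<And>s. 0 \<le> T s" and Tb: "\<And>s. 0 < s \<Longrightarrow> T s \<le> C0 * (1 + s) powr (- e)"
    and U0: "0 \<le> U0" and S: "0 \<le> S"
    and gK: "\<And>z. 0 \<le> z \<Longrightarrow> z \<le> U0 \<Longrightarrow> \<bar>g z\<bar> \<le> K0"
    and gS: "\<And>z. 0 \<le> z \<Longrightarrow> z \<le> u \<Longrightarrow> \<bar>g z\<bar> \<le> S * (1 + z) powr (-1 - e)"
    and u: "0 < u"
    and g_eq: "g u = m / (u powr G * exp (- A / u)) *
      (LINT t:{0<..<u}|lborel. t powr (G - 2) * exp (- A / t) *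
        (p * T t + (LINT z:{0<..<t}|lborel. g z * T (t - z))))"
  shows "\<bar>g u\<bar> \<le> m * (p * C0 + K0 * C0 * (1 + U0) powr (1 + 2 * e) / e +
      S * C0 * 2 powr (1 + e) * (1 + U0) powr (- e / 2) * (2 / e + 1 / (1 - e))) /
    (G - 1 - e) * u powr (-1 - e)"
proof -
  define E where "E = K0 * C0 * (1 + U0) powr (1 + 2 * e) / e +
      S * C0 * 2 powr (1 + e) * (1 + U0) powr (- e / 2) * (2 / e + 1 / (1 - e))"
  have "0 \<le> K0"
    using gK[of 0] U0 by linarith
  moreover have "0 \<le> 2 / e + 1 / (1 - e)"
    using e by simp
  ultimately have "0 \<le> E"
    using e C0 S unfolding E_def by simp
  then have D: "0 \<le> p * C0 + E"
    using p C0 by simp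
  have "\<bar>p * T t + (LINT z:{0<..<t}|lborel. g z * T (t - z))\<bar> \<le> (p * C0 + E) * (1 + t) powr (- e)"
    if t: "0 < t" "t < u" for t
  proof -
    have "\<bar>LINT z:{0<..<t}|lborel. g z * T (t - z)\<bar> \<le> (1 + t) powr (- e) * E"
      unfolding E_def using gS t by (intro abs_convolution_le_shifted_powr[OF e U0 S C0 t(1) gK _ T0 Tb]) auto
    moreover have "\<bar>p * T t\<bar> \<le> p * (C0 * (1 + t) powr (- e))"
      using T0[of t] Tb[OF t(1)] p by (simp add: abs_mult mult_left_mono)
    ultimately have "\<bar>p * T t\<bar> + \<bar>LINT z:{0<..<t}|lborel. g z * T (t - z)\<bar> \<le> (p * C0 + E) * (1 + t) powr (- e)"
      by (simp add: algebra_simps)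
    then show ?thesis
      by (rule order_trans[OF abs_triangle_ineq])
  qed
  with abs_weighted_average_le_powr[OF _ G A m D u] e
  have "\<bar>g u\<bar> \<le> m * (p * C0 + E) / (G - 1 - e) * u powr (-1 - e)"
    unfolding g_eq by simp
  then show ?thesis
    unfolding E_def by (simp add: add.assoc)
qed

lemma bounded_of_self_improving_bound:
  fixes h :: "real \<Rightarrow> real" and U0 c :: real
  assumes cont: "continuous_on {0..} h"
    and improve: "\<And>U S z. U0 \<le> U \<Longrightarrow> (\<And>y. 0 \<le> y \<Longrightarrow> y \<le> U \<Longrightarrow> h y \<le> S) \<Longrightarrow>
      U0 < z \<Longrightarrow> z \<le> U \<Longrightarrow> h z \<le> c + S / 2"
  shows "\<exists>B. \<forall>z\<ge>0. h z \<le> B"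
proof -
  have bdd: "bdd_above (h ` {0..U})" for U
    using continuous_on_subset[OF cont]
    by (intro bounded_imp_bdd_above compact_imp_bounded compact_continuous_image) auto
  obtain K where K: "\<forall>y\<in>{0..U0}. h y \<le> K"
    using bdd[of U0] by (auto simp: bdd_above_def)
  have "h z \<le> max K (2 * c)" if z: "0 \<le> z" for z
  proof -
    define U where "U = max U0 z"
    define S where "S = Sup (h ` {0..U})"
    have S: "h y \<le> S" if "0 \<le> y" "y \<le> U" for y
      unfolding S_def using that by (intro cSup_upper bdd) auto
    have "h y \<le> max K (c + S / 2)" if y: "0 \<le> y" "y \<le> U" for y
    proof (cases "y \<le> U0")
      case True
      with K y have "h y \<le> K"
        by simp
      then show ?thesis
        by simp
    next
      case False
      have "h y \<le> c + S / 2"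
        by (rule improve[of U S y]) (use S y False in \<open>auto simp: U_def\<close>)
      then show ?thesis
        by simp
    qed
    then have "S \<le> max K (c + S / 2)"
      unfolding S_def using z by (intro cSup_least) (auto simp: U_def)
    then have "S \<le> max K (2 * c)"
      by linarith
    then show ?thesis
      using S[of z] z by (simp add: U_def)
  qed
  then show ?thesis
    by blast
qed

lemma weighted_solution_le_of_bounds:
  fixes g T :: "real \<Rightarrow> real" and e G A m p C0 U0 K0 S z :: real
  assumes e: "0 < e" "e < 1" and G: "1 + e < G" and A: "0 \<le> A" and m: "0 \<le> m"
    and p: "0 \<le> p" and C0: "0 \<le> C0"
    and T0: "\<And>s. 0 \<le> T s" and Tb: "\<And>s. 0 < s \<Longrightarrow> T s \<le> C0 * (1 + s) powr (- e)"
    and U0: "0 \<le> U0" and K0: "0 \<le> K0" "\<And>y. 0 \<le> y \<Longrightarrow> y \<le> U0 \<Longrightarrow> \<bar>g y\<bar> \<le> K0"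
    and hS: "\<And>y. 0 \<le> y \<Longrightarrow> y \<le> z \<Longrightarrow> \<bar>g y\<bar> * (1 + y) powr (1 + e) \<le> S"
    and z: "1 \<le> z"
    and g_eq: "g z = m / (z powr G * exp (- A / z)) *
      (LINT t:{0<..<z}|lborel. t powr (G - 2) * exp (- A / t) *
        (p * T t + (LINT y:{0<..<t}|lborel. g y * T (t - y))))"
  shows "\<bar>g z\<bar> * (1 + z) powr (1 + e) \<le>
    2 powr (1 + e) * m / (G - 1 - e) * (p * C0 + K0 * C0 * (1 + U0) powr (1 + 2 * e) / e) +
    S * ((1 + U0) powr (- e / 2) * (C0 * 2 powr (1 + e) * (2 / e + 1 / (1 - e))) *
      (2 powr (1 + e) * m / (G - 1 - e)))"
proof -
  define P where "P = p * C0 + K0 * C0 * (1 + U0) powr (1 + 2 * e) / e"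
  define Q where "Q = (1 + U0) powr (- e / 2) * (C0 * 2 powr (1 + e) * (2 / e + 1 / (1 - e)))"
  have S: "0 \<le> S"
    using hS[of 0] z by (simp add: order_trans[OF abs_ge_zero])
  have gS: "\<bar>g y\<bar> \<le> S * (1 + y) powr (-1 - e)" if "0 \<le> y" "y \<le> z" for y
    using hS[OF that] that mult_shifted_powr_le_iff[of y] by simp
  have z0: "0 < z"
    using z by simp
  have "\<bar>g z\<bar> \<le> m * (P + S * Q) / (G - 1 - e) * z powr (-1 - e)"
    using abs_solution_le_of_bounds[OF e G A m p C0 T0 Tb U0 S K0(2) gS z0 g_eq]
    unfolding P_def Q_def by (simp add: ac_simps)
  moreover have "0 \<le> m * (P + S * Q) / (G - 1 - e)"
    using e G m p C0 S K0(1) unfolding P_def Q_def by simp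
  ultimately have "\<bar>g z\<bar> * (1 + z) powr (1 + e) \<le> 2 powr (1 + e) * (m * (P + S * Q) / (G - 1 - e))"
    using z e by (intro mult_shifted_powr_le_of_le_powr) auto
  then show ?thesis
    unfolding P_def[symmetric] Q_def[symmetric] by (simp add: field_simps add_divide_distrib)
qed

lemma volterra_solution_decay:
  fixes g T :: "real \<Rightarrow> real" and e G A m p C0 :: real
  assumes e: "0 < e" "e < 1" and G: "1 + e < G" and A: "0 \<le> A" and m: "0 \<le> m" and p: "0 \<le> p"
    and T0: "\<And>s. 0 \<le> T s" and Tb: "\<And>s. 0 < s \<Longrightarrow> T s \<le> C0 * (1 + s) powr (- e)"
    and g_cont: "continuous_on {0..} g"
    and g_eq: "\<And>u. 0 < u \<Longrightarrow> g u = m / (u powr G * exp (- A / u)) *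
      (LINT t:{0<..<u}|lborel. t powr (G - 2) * exp (- A / t) *
        (p * T t + (LINT z:{0<..<t}|lborel. g z * T (t - z))))"
  shows "\<exists>B. \<forall>z\<ge>0. \<bar>g z\<bar> \<le> B * (1 + z) powr (-1 - e)"
proof -
  have C0: "0 \<le> C0"
    using order_trans[OF T0 Tb[of 1]] by (simp add: zero_le_mult_iff)
  define E where "E = C0 * 2 powr (1 + e) * (2 / e + 1 / (1 - e)) * (2 powr (1 + e) * m / (G - 1 - e))"
  \<comment> \<open>For this U0, the part z > U0 of the convolution contributes at most S/2 below.\<close>
  have "\<forall>\<^sub>F U in at_top. 1 \<le> U \<and> (1 + U) powr (- (e / 2)) * E \<le> 1 / 2"
    using e by (intro eventually_conj eventually_ge_at_top eventually_shifted_powr_mult_le) auto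
  then obtain U0 where U0: "1 \<le> U0" "(1 + U0) powr (- e / 2) * E \<le> 1 / 2"
    by (auto simp: eventually_at_top_linorder)
  obtain K0 where "0 \<le> K0" "\<And>z. z \<in> {0..U0} \<Longrightarrow> norm (g z) \<le> K0"
    using continuous_on_compact_bound[OF compact_Icc continuous_on_subset[OF g_cont]] by auto
  then have K0: "0 \<le> K0" "\<And>z. 0 \<le> z \<Longrightarrow> z \<le> U0 \<Longrightarrow> \<bar>g z\<bar> \<le> K0"
    by simp_all
  define c where "c = 2 powr (1 + e) * m / (G - 1 - e) * (p * C0 + K0 * C0 * (1 + U0) powr (1 + 2 * e) / e)"
  define h where "h = (\<lambda>z. \<bar>g z\<bar> * (1 + z) powr (1 + e))"
  have h_cont: "continuous_on {0..} h"
    unfolding h_def using g_cont by (intro continuous_intros) auto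
  have "h z \<le> c + S / 2"
    if "U0 \<le> U" and hS: "\<And>y. 0 \<le> y \<Longrightarrow> y \<le> U \<Longrightarrow> h y \<le> S" and z: "U0 < z" "z \<le> U"
    for U S z
  proof -
    have S: "0 \<le> S"
      using hS[of 0] U0 that(1) unfolding h_def by simp
    have U0_nonneg: "0 \<le> U0" and z1: "1 \<le> z" and z0: "0 < z"
      using U0 z by simp_all
    have hS': "\<bar>g y\<bar> * (1 + y) powr (1 + e) \<le> S" if "0 \<le> y" "y \<le> z" for y
      using hS that z unfolding h_def by simp
    note weighted_solution_le_of_bounds[OF e G A m p C0 T0 Tb U0_nonneg K0 hS' z1 g_eq[OF z0]]
    then have "h z \<le> c + S * ((1 + U0) powr (- e / 2) * E)"
      unfolding h_def c_def E_def by (simp add: ac_simps)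
    also have "\<dots> \<le> c + S * (1 / 2)"
      using U0(2) S by (intro add_left_mono mult_left_mono)
    finally show ?thesis
      by simp
  qed
  from bounded_of_self_improving_bound[OF h_cont this]
  obtain B where B: "\<forall>z\<ge>0. h z \<le> B" ..
  have "\<bar>g z\<bar> \<le> B * (1 + z) powr (-1 - e)" if "0 \<le> z" for z
    using B that mult_shifted_powr_le_iff[of z "\<bar>g z\<bar>" e B] unfolding h_def by simp
  then show ?thesis
    by blast
qed

lemma bigo_powr_of_shifted_powr_bound:
  fixes g :: "real \<Rightarrow> real" and B e :: real
  assumes e: "0 \<le> e" and bound: "\<And>z. 0 \<le> z \<Longrightarrow> \<bar>g z\<bar> \<le> B * (1 + z) powr (-1 - e)"
  shows "g \<in> O[at_top](\<lambda>u. u powr (-1 - e))"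
proof (rule bigoI[where c = B])
  have "0 \<le> B"
    using order_trans[OF abs_ge_zero bound[of 0]] by simp
  then have "norm (g x) \<le> B * norm (x powr (-1 - e))" if "1 \<le> x" for x
    using that e bound[of x] powr_mono2'[of "-1 - e" x "1 + x"]
    by (auto intro: order_trans mult_left_mono)
  then show "\<forall>\<^sub>F x in at_top. norm (g x) \<le> B * norm (x powr (-1 - e))"
    unfolding eventually_at_top_linorder by blast
qed

lemma set_integrable_of_shifted_powr_bound:
  fixes g :: "real \<Rightarrow> real" and B e :: real
  assumes cont: "continuous_on {0..} g" and e: "0 < e"
    and bound: "\<And>z. 0 \<le> z \<Longrightarrow> \<bar>g z\<bar> \<le> B * (1 + z) powr (-1 - e)"
  shows "set_integrable lborel {0..} g"
proof -
  have "set_integrable lborel {0<..} (\<lambda>z. B * (1 + z) powr (-1 - e))"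
    using set_integrable_shifted_powr_Ioi[OF e] by simp
  moreover have "set_integrable lborel {0..0} (\<lambda>z. B * (1 + z) powr (-1 - e))"
    by (rule borel_integrable_atLeastAtMost') (auto intro!: continuous_intros)
  moreover have "{0<..} \<union> {0..0} = {0::real..}"
    by auto
  ultimately have majorant: "set_integrable lborel {0..} (\<lambda>z. B * (1 + z) powr (-1 - e))"
    using set_integrable_Un[of lborel "{0<..}" _ "{0..0}"] by fastforce
  have "set_borel_measurable lborel {0..} g"
    unfolding set_borel_measurable_def using borel_measurable_continuous_on_indicator[OF _ cont] by simp
  then show ?thesis
    using bound by (intro set_integrable_bound[OF majorant])
      (auto intro!: AE_I2 intro: order_trans[OF _ abs_ge_self] simp: indicator_def)
qed

theorem lemma3:
  fixes M :: "'a measure" and xi :: "'a \<Rightarrow> real"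
    and \<kappa> a r \<sigma> c lam \<epsilon> p :: real and g :: "real \<Rightarrow> real"
  assumes M: "prob_space M"
    and xi_rv: "xi \<in> borel_measurable M"
    and xi_pos: "AE \<omega> in M. xi \<omega> > 0"
    and \<kappa>: "0 < \<kappa>" "\<kappa> \<le> 1" and r: "0 \<le> r" and \<sigma>: "0 < \<sigma>"
    and c: "0 < c" and lam: "0 < lam"
    and A1: "distr_fun M xi 0 = 0"
    and A3: "2 * ((a - r) * \<kappa> + r) / (\<kappa>^2 * \<sigma>^2) > 1"
    and \<epsilon>: "0 < \<epsilon>" "\<epsilon> < 1"
    and mom: "integrable M (\<lambda>\<omega>. xi \<omega> powr \<epsilon>)"
    and \<gamma>\<epsilon>: "2 * ((a - r) * \<kappa> + r) / (\<kappa>^2 * \<sigma>^2) - 1 - \<epsilon> > 0"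
    and p: "0 < p"
    and g_cont: "continuous_on {0..} g"
    and g_eq: "\<And>u. u > 0 \<Longrightarrow>
       g u = (2 * lam / (\<kappa>^2 * \<sigma>^2)) /
               (u powr (2 * ((a - r) * \<kappa> + r) / (\<kappa>^2 * \<sigma>^2))
                * exp (- (2 * c / (\<kappa>^2 * \<sigma>^2)) / u))
             * (LINT t:{0<..<u}|lborel.
                  t powr (2 * ((a - r) * \<kappa> + r) / (\<kappa>^2 * \<sigma>^2) - 2)
                  * exp (- (2 * c / (\<kappa>^2 * \<sigma>^2)) / t)
                  * (p * tail_fun M xi t
                     + (LINT z:{0<..<t}|lborel. g z * tail_fun M xi (t - z))))"
  shows "g \<in> O[at_top](\<lambda>u. u powr (-1 - \<epsilon>)) \<and> set_integrable lborel {0..} g"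
proof -
  have tail_bound: "tail_fun M xi s \<le> (2 powr \<epsilon> * (1 + (\<integral>\<omega>. xi \<omega> powr \<epsilon> \<partial>M))) * (1 + s) powr (- \<epsilon>)"
    if "0 < s" for s
    using tail_fun_le_shifted_powr[OF M xi_rv mom that \<epsilon>(1)] by simp
  have "1 + \<epsilon> < 2 * ((a - r) * \<kappa> + r) / (\<kappa>^2 * \<sigma>^2)"
    using \<gamma>\<epsilon> by simp
  moreover have "0 \<le> 2 * c / (\<kappa>^2 * \<sigma>^2)" "0 \<le> 2 * lam / (\<kappa>^2 * \<sigma>^2)"
    using c lam by simp_all
  ultimately obtain B where "\<forall>z\<ge>0. \<bar>g z\<bar> \<le> B * (1 + z) powr (-1 - \<epsilon>)"
    using volterra_solution_decay[OF \<epsilon> _ _ _ less_imp_le[OF p] tail_fun_nonneg[OF M] tail_bound g_cont g_eq]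
    by blast
  then show ?thesis
    using bigo_powr_of_shifted_powr_bound[of \<epsilon> g B] set_integrable_of_shifted_powr_bound[OF g_cont \<epsilon>(1), of B] \<epsilon>
    by auto
qed

end
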